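(* Let $F$ be a field of characteristic $2$. Let $\mathcal G$ be the group with presentation $\langle y_1,y_2,\dots \mid y_i^2=1,\ ((y_i,y_j),y_k)=1\ (i,j,k\ge 1)\rangle$, where $(a,b)=a^{-1}b^{-1}ab$, and let $F\mathcal G$ be its group algebra. For $i,j\ge1$ put $d_{ij}=(y_i,y_j)+1\in F\mathcal G$, and let $I$ be the two-sided ideal of $F\mathcal G$ generated by all elements $d_{i_1i_2}d_{i_3i_4}+d_{i_1i_3}d_{i_2i_4}$ with $i_1,i_2,i_3,i_4\ge 1$. Let $\ell>0$ and let $i_1,i_2,\dots,i_{2\ell}$ be pairwise distinct positive integers. Then \[ \bigl((y_{i_1},y_{i_2})+1\bigr)\bigl((y_{i_3},y_{i_4})+1\bigr)\cdots\bigl((y_{i_{2\ell-1}},y_{i_{2\ell}})+1\bigr)\notin I. \] *)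

theory Defs
  imports Main "HOL-Library.Poly_Mapping"
begin

text \<open>Generators are indexed by nat starting at 0; the paper's y_{n+1} is our generator n.
  A letter (n, False) stands for y_n, (n, True) for its formal inverse.\<close>

type_synonym word = "(nat \<times> bool) list"

fun linv :: "nat \<times> bool \<Rightarrow> nat \<times> bool" where
  "linv (n, b) = (n, \<not> b)"

definition winv :: "word \<Rightarrow> word" where
  "winv w = rev (map linv w)"

definition wgen :: "nat \<Rightarrow> word" where
  "wgen n = [(n, False)]"

definition wcomm :: "word \<Rightarrow> word \<Rightarrow> word" where
  "wcomm a b = winv a @ winv b @ a @ b"

inductive pres_eq :: "word \<Rightarrow> word \<Rightarrow> bool" where
  refl: "pres_eq w w"
| sym: "pres_eq v w \<Longrightarrow> pres_eq w v"
| trans: "pres_eq u v \<Longrightarrow> pres_eq v w \<Longrightarrow> pres_eq u w"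
| cancel: "pres_eq (u @ [x, linv x] @ v) (u @ v)"
| rel_sq: "pres_eq (u @ wgen i @ wgen i @ v) (u @ v)"
| rel_comm: "pres_eq (u @ wcomm (wcomm (wgen i) (wgen j)) (wgen k) @ v) (u @ v)"

lemma pres_eq_equivp: "equivp pres_eq"
  by (intro equivpI reflpI sympI transpI) (auto intro: pres_eq.intros)

quotient_type grp = word / pres_eq
  by (rule pres_eq_equivp)

lemma pres_eq_append_right: "pres_eq a b \<Longrightarrow> pres_eq (a @ c) (b @ c)"
proof (induction rule: pres_eq.induct)
  case (cancel u x v) show ?case using pres_eq.cancel[of u x "v @ c"] by simp
next
  case (rel_sq u i v) show ?case using pres_eq.rel_sq[of u i "v @ c"] by simp
next
  case (rel_comm u i j k v) show ?case using pres_eq.rel_comm[of u i j k "v @ c"] by simp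
qed (auto intro: pres_eq.intros)

lemma pres_eq_append_left: "pres_eq a b \<Longrightarrow> pres_eq (c @ a) (c @ b)"
proof (induction rule: pres_eq.induct)
  case (cancel u x v) show ?case using pres_eq.cancel[of "c @ u" x v] by simp
next
  case (rel_sq u i v) show ?case using pres_eq.rel_sq[of "c @ u" i v] by simp
next
  case (rel_comm u i j k v) show ?case using pres_eq.rel_comm[of "c @ u" i j k v] by simp
qed (auto intro: pres_eq.intros)

text \<open>The group multiplication is written additively (as \<open>+\<close>), so that the
  library monoid algebra \<open>grp \<Rightarrow>\<^sub>0 'a\<close> (Poly_Mapping, convolution product) is the group algebra.\<close>
instantiation grp :: monoid_add
begin
lift_definition zero_grp :: grp is "[]" .
lift_definition plus_grp :: "grp \<Rightarrow> grp \<Rightarrow> grp" is "(@)"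
  by (meson pres_eq.trans pres_eq_append_left pres_eq_append_right)
instance by standard (transfer, simp add: pres_eq.refl)+
end

definition gen :: "nat \<Rightarrow> grp" where
  "gen n = abs_grp [(n, False)]"

definition gen_inv :: "nat \<Rightarrow> grp" where
  "gen_inv n = abs_grp [(n, True)]"

definition gcomm :: "nat \<Rightarrow> nat \<Rightarrow> grp" where
  "gcomm i j = gen_inv i + gen_inv j + gen i + gen j"

definition grp_elt :: "grp \<Rightarrow> (grp \<Rightarrow>\<^sub>0 'a::field)" where
  "grp_elt g = Poly_Mapping.single g 1"

definition dd :: "nat \<Rightarrow> nat \<Rightarrow> (grp \<Rightarrow>\<^sub>0 'a::field)" where
  "dd i j = grp_elt (gcomm i j) + 1"

inductive_set ideal_gen :: "'r::ring set \<Rightarrow> 'r set" for S where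
  base: "s \<in> S \<Longrightarrow> s \<in> ideal_gen S"
| zero: "0 \<in> ideal_gen S"
| add: "a \<in> ideal_gen S \<Longrightarrow> b \<in> ideal_gen S \<Longrightarrow> a + b \<in> ideal_gen S"
| lmult: "a \<in> ideal_gen S \<Longrightarrow> r * a \<in> ideal_gen S"
| rmult: "a \<in> ideal_gen S \<Longrightarrow> a * r \<in> ideal_gen S"

definition I_ideal :: "(grp \<Rightarrow>\<^sub>0 'a::field) set" where
  "I_ideal = ideal_gen {dd i1 i2 * dd i3 i4 + dd i1 i3 * dd i2 i4 | i1 i2 i3 i4. True}"

end

theory Submission
  imports Defs
begin

text \<open>\<open>G\<close> is nilpotent of class two, so every element has a normal form
  \<open>y\<^sup>s \<cdot> \<Prod> (y\<^sub>i,y\<^sub>j)\<^sup>c\<^sup>i\<^sup>j\<close> with central commutators, and \<open>(y\<^sub>i,y\<^sub>j) \<mapsto> 1 + X\<^sub>iX\<^sub>j\<close> is a homomorphism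
  from the commutator subgroup into the units of \<open>F[X\<^sub>i : i \<in> T]\<close> modulo the squares
  \<open>X\<^sub>i\<^sup>2\<close>, because \<open>(1 + X\<^sub>iX\<^sub>j)\<^sup>2 = 1\<close> in characteristic 2. For \<open>T = {i\<^sub>1, \<dots>, i\<^sub>2\<^sub>\<ell>}\<close> let
  \<open>\<Lambda>(g)\<close> be the coefficient of \<open>\<Prod>\<^sub>i\<^sub>\<in>\<^sub>T X\<^sub>i\<close> in the image of \<open>g\<close> when \<open>g\<close> is a product of
  commutators, and \<open>0\<close> otherwise, extended linearly to \<open>FG\<close>. Centrality gives
  \<open>\<Lambda>(g d\<^sub>a\<^sub>b\<^sub>1 \<cdots> d\<^sub>a\<^sub>b\<^sub>k h) = \<Lambda>(gh \<cdot> X\<^sub>a\<^sub>1X\<^sub>b\<^sub>1 \<cdots> X\<^sub>a\<^sub>kX\<^sub>b\<^sub>k)\<close>. Hence \<open>\<Lambda>\<close> kills \<open>I\<close>, whose generators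
  become \<open>X\<^sub>i\<^sub>1X\<^sub>i\<^sub>2X\<^sub>i\<^sub>3X\<^sub>i\<^sub>4 + X\<^sub>i\<^sub>1X\<^sub>i\<^sub>3X\<^sub>i\<^sub>2X\<^sub>i\<^sub>4 = 0\<close>, but takes the value \<open>1\<close> on the product in
  question.\<close>

section \<open>Normal forms in \<open>G\<close>\<close>

type_synonym coords = "(nat \<Rightarrow> bool) \<times> (nat \<Rightarrow> nat \<Rightarrow> bool)"

text \<open>A pair \<open>(s, c)\<close> encodes the normal form
  \<open>\<Prod>\<^sub>i y\<^sub>i^(s i) \<cdot> \<Prod>\<^sub>j\<^sub><\<^sub>i (y\<^sub>i,y\<^sub>j)^(c i j)\<close>; right multiplication by \<open>y\<^sub>n\<close> moves \<open>y\<^sub>n\<close>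
  past every \<open>y\<^sub>i\<close> with \<open>i > n\<close> present in \<open>s\<close>, creating the central factor \<open>(y\<^sub>i,y\<^sub>n)\<close>.\<close>
fun mul_gen :: "nat \<Rightarrow> coords \<Rightarrow> coords" where
  "mul_gen n (s, c) = (s(n := \<not> s n), \<lambda>i j. c i j \<noteq> (j = n \<and> s i \<and> n < i))"

fun flip_comm :: "nat \<Rightarrow> nat \<Rightarrow> coords \<Rightarrow> coords" where
  "flip_comm a b (s, c) = (s, \<lambda>i j. c i j \<noteq> (a \<noteq> b \<and> i = max a b \<and> j = min a b))"

lemma mul_gen_mul_gen [simp]: "mul_gen n (mul_gen n x) = x"
  by (cases x) (auto simp: fun_eq_iff)

lemma mul_gen_flip_comm [simp]: "mul_gen n (flip_comm a b x) = flip_comm a b (mul_gen n x)"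
  by (cases x) (auto simp: fun_eq_iff)

lemma flip_comm_flip_comm [simp]: "flip_comm a b (flip_comm a b x) = x"
  by (cases x) (auto simp: fun_eq_iff)

lemma flip_comm_commute: "flip_comm b a x = flip_comm a b x"
  by (cases x) (auto simp: fun_eq_iff max_def min_def)

lemma fst_flip_comm [simp]: "fst (flip_comm a b x) = fst x"
  by (cases x) simp

lemma mul_gen_commutator: "mul_gen b (mul_gen a (mul_gen b (mul_gen a x))) = flip_comm a b x"
  by (cases x) (auto simp: fun_eq_iff max_def min_def)

text \<open>Inverse letters act like the letters themselves, since \<open>y\<^sub>n\<^sup>-\<^sup>1 = y\<^sub>n\<close>.\<close>
definition word_act :: "word \<Rightarrow> coords \<Rightarrow> coords" where
  "word_act w = fold mul_gen (map fst w)"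

lemma fst_linv [simp]: "fst (linv x) = fst x"
  by (cases x) simp

lemma word_act_relator: "word_act (wcomm (wcomm (wgen i) (wgen j)) (wgen k)) x = x"
proof -
  have "map fst (wcomm (wcomm (wgen i) (wgen j)) (wgen k)) = [j, i, j, i, k, i, j, i, j, k]"
    by (simp add: wcomm_def winv_def wgen_def)
  then show ?thesis
    by (simp add: word_act_def mul_gen_commutator mul_gen_commutator[of j i]
        flip_comm_commute[of j i])
qed

lemma word_act_pres_eq: "pres_eq v w \<Longrightarrow> word_act v = word_act w"
proof (induction rule: pres_eq.induct)
  case (rel_comm u i j k v)
  then show ?case
    using word_act_relator[of i j k] by (simp add: word_act_def)
qed (auto simp: word_act_def wgen_def fun_eq_iff)

lemma fold_mul_gen_flip_comm: "fold mul_gen ns (flip_comm a b x) = flip_comm a b (fold mul_gen ns x)"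
  by (induction ns arbitrary: x) simp_all

lift_definition grp_act :: "grp \<Rightarrow> coords \<Rightarrow> coords" is word_act
  by (rule word_act_pres_eq)

lemma grp_act_plus: "grp_act (g + h) x = grp_act h (grp_act g x)"
  by transfer (simp add: word_act_def)

lemma grp_act_flip_comm: "grp_act g (flip_comm a b x) = flip_comm a b (grp_act g x)"
  by transfer (simp add: word_act_def fold_mul_gen_flip_comm)

lemma grp_act_gcomm: "grp_act (gcomm a b) x = flip_comm a b x"
  by (simp add: gcomm_def gen_def gen_inv_def grp_act_plus grp_act.abs_eq word_act_def
      mul_gen_commutator)

definition coords_of :: "grp \<Rightarrow> coords" where
  "coords_of g = grp_act g (\<lambda>_. False, \<lambda>_ _. False)"

lemma coords_of_zero: "coords_of 0 = (\<lambda>_. False, \<lambda>_ _. False)"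
  by (simp add: coords_of_def zero_grp.abs_eq grp_act.abs_eq word_act_def)

lemma coords_of_insert_gcomm:
  "coords_of (g + gcomm a b + h) = flip_comm a b (coords_of (g + h))"
  by (simp add: coords_of_def grp_act_plus grp_act_gcomm grp_act_flip_comm)

section \<open>Polynomials modulo squares of the variables\<close>

type_synonym 'a mpoly = "(nat \<Rightarrow>\<^sub>0 nat) \<Rightarrow>\<^sub>0 'a"

abbreviation unit_mono :: "nat \<Rightarrow> nat \<Rightarrow>\<^sub>0 nat" where
  "unit_mono i \<equiv> Poly_Mapping.single i 1"

definition Var :: "nat \<Rightarrow> 'a::comm_ring_1 mpoly" where
  "Var i = Poly_Mapping.single (unit_mono i) 1"

definition sqfree_monomial :: "(nat \<Rightarrow>\<^sub>0 nat) \<Rightarrow> bool" where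
  "sqfree_monomial m \<longleftrightarrow> (\<forall>i. Poly_Mapping.lookup m i \<le> 1)"

text \<open>Congruence modulo the ideal spanned by the monomials that are not squarefree.\<close>
definition cong_sqfree :: "'a::comm_ring_1 mpoly \<Rightarrow> 'a mpoly \<Rightarrow> bool" where
  "cong_sqfree p q \<longleftrightarrow>
     (\<forall>m. sqfree_monomial m \<longrightarrow> Poly_Mapping.lookup p m = Poly_Mapping.lookup q m)"

lemma cong_sqfree_refl [simp]: "cong_sqfree p p"
  by (simp add: cong_sqfree_def)

lemma cong_sqfree_sym: "cong_sqfree p q \<Longrightarrow> cong_sqfree q p"
  by (simp add: cong_sqfree_def)

lemma cong_sqfree_add: "cong_sqfree p q \<Longrightarrow> cong_sqfree p' q' \<Longrightarrow> cong_sqfree (p + p') (q + q')"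
  by (simp add: cong_sqfree_def lookup_add)

lemma sqfree_monomial_add_left: "sqfree_monomial (m + n) \<Longrightarrow> sqfree_monomial m"
  unfolding sqfree_monomial_def by (metis le_add1 le_trans lookup_add)

lemma cong_sqfree_mult_right:
  assumes "cong_sqfree p q"
  shows "cong_sqfree (p * r) (q * r)"
  unfolding cong_sqfree_def
proof (intro allI impI)
  fix m assume "sqfree_monomial m"
  then have "Poly_Mapping.lookup p l = Poly_Mapping.lookup q l" if "m = l + n" for l n
    using assms sqfree_monomial_add_left that by (auto simp: cong_sqfree_def)
  then have "Poly_Mapping.lookup p l * (\<Sum>n. Poly_Mapping.lookup r n when m = l + n)
           = Poly_Mapping.lookup q l * (\<Sum>n. Poly_Mapping.lookup r n when m = l + n)" for l
    by (cases "\<exists>n. m = l + n") auto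
  then show "Poly_Mapping.lookup (p * r) m = Poly_Mapping.lookup (q * r) m"
    by (simp only: lookup_mult)
qed

lemma cong_sqfree_mult_left: "cong_sqfree p q \<Longrightarrow> cong_sqfree (r * p) (r * q)"
  using cong_sqfree_mult_right[of p q r] by (simp add: mult.commute)

lemma cong_sqfree_single_zero: "\<not> sqfree_monomial m \<Longrightarrow> cong_sqfree (Poly_Mapping.single m c) 0"
  by (auto simp: cong_sqfree_def lookup_single when_def)

lemma add_self_eq_zero_char2:
  assumes "CHAR('a::ring_1) = 2"
  shows "(x::'a) + x = 0"
proof -
  have "(2::'a) = 0"
    using of_nat_CHAR[where 'a = 'a] assms by simp
  then show ?thesis
    by (metis mult_2 mult_zero_left)
qed

lemma mpoly_add_self_eq_zero_char2:
  assumes "CHAR('a::comm_ring_1) = 2"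
  shows "(p::'a mpoly) + p = 0"
  by (rule poly_mapping_eqI) (simp only: lookup_add lookup_zero add_self_eq_zero_char2[OF assms])

lemma Var_mult_Var:
  "Var a * Var b = Poly_Mapping.single (unit_mono a + unit_mono b) 1"
  by (simp add: Var_def mult_single)

lemma cong_sqfree_square_one_plus:
  assumes "CHAR('a::comm_ring_1) = 2"
  shows "cong_sqfree ((1 + Var a * Var b) * (1 + Var a * Var b) :: 'a mpoly) 1"
proof -
  let ?u = "Var a * Var b :: 'a mpoly"
  have "\<not> sqfree_monomial (unit_mono a + unit_mono b + (unit_mono a + unit_mono b))"
    unfolding sqfree_monomial_def by (auto simp: lookup_add lookup_single when_def intro!: exI[of _ a])
  then have "cong_sqfree (?u * ?u) 0"
    by (simp add: Var_mult_Var mult_single cong_sqfree_single_zero)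
  then have "cong_sqfree (1 + (?u + ?u) + ?u * ?u) (1 + 0 + 0)"
    by (intro cong_sqfree_add) (simp_all add: mpoly_add_self_eq_zero_char2[OF assms])
  moreover have "(1 + ?u) * (1 + ?u) = 1 + (?u + ?u) + ?u * ?u"
    by (simp add: algebra_simps)
  ultimately show ?thesis by simp
qed

definition mono_set :: "nat set \<Rightarrow> nat \<Rightarrow>\<^sub>0 nat" where
  "mono_set T = (\<Sum>i\<in>T. unit_mono i)"

lemma sqfree_monomial_mono_set: "finite T \<Longrightarrow> sqfree_monomial (mono_set T)"
  by (simp add: sqfree_monomial_def mono_set_def lookup_sum lookup_single when_def)

definition coeff_set :: "nat set \<Rightarrow> 'a::comm_ring_1 mpoly \<Rightarrow> 'a" where
  "coeff_set T p = Poly_Mapping.lookup p (mono_set T)"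

lemma coeff_set_cong_sqfree: "finite T \<Longrightarrow> cong_sqfree p q \<Longrightarrow> coeff_set T p = coeff_set T q"
  by (simp add: coeff_set_def cong_sqfree_def sqfree_monomial_mono_set)

lemma coeff_set_add: "coeff_set T (p + q) = coeff_set T p + coeff_set T q"
  by (simp add: coeff_set_def lookup_add)

text \<open>The image of \<open>d\<^sub>a\<^sub>b\<close>, where only the variables indexed by \<open>T\<close> are kept.\<close>
definition pair_var :: "nat set \<Rightarrow> nat \<Rightarrow> nat \<Rightarrow> 'a::comm_ring_1 mpoly" where
  "pair_var T a b = (if a \<in> T \<and> b \<in> T \<and> a \<noteq> b then Var a * Var b else 0)"

lemma cong_sqfree_pair_var_relation:
  assumes "CHAR('a::comm_ring_1) = 2"
  shows "cong_sqfree (pair_var T a1 a2 * pair_var T a3 a4 + pair_var T a1 a3 * pair_var T a2 a4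
                      :: 'a mpoly) 0"
proof -
  let ?m = "unit_mono a1 + unit_mono a2 + (unit_mono a3 + unit_mono a4)"
  let ?m' = "unit_mono a1 + unit_mono a3 + (unit_mono a2 + unit_mono a4)"
  have swap: "?m' = ?m"
    by (simp add: ac_simps)
  consider "a1 \<in> T \<and> a2 \<in> T \<and> a3 \<in> T \<and> a4 \<in> T \<and> distinct [a1, a2, a3, a4]"
    | "\<not> (a1 \<in> T \<and> a2 \<in> T \<and> a3 \<in> T \<and> a4 \<in> T)"
    | "a1 \<in> T \<and> a2 \<in> T \<and> a3 \<in> T \<and> a4 \<in> T \<and> \<not> distinct [a1, a2, a3, a4]"
    by blast
  then show ?thesis
  proof cases
    case 1
    then have "pair_var T a1 a2 * pair_var T a3 a4 = (Poly_Mapping.single ?m 1 :: 'a mpoly)"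
      and "pair_var T a1 a3 * pair_var T a2 a4 = (Poly_Mapping.single ?m' 1 :: 'a mpoly)"
      by (simp_all add: pair_var_def Var_mult_Var mult_single)
    then show ?thesis
      unfolding swap
      by (simp add: mpoly_add_self_eq_zero_char2[OF assms])
  next
    case 2
    then have "pair_var T a1 a2 * pair_var T a3 a4 = (0 :: 'a mpoly)"
      and "pair_var T a1 a3 * pair_var T a2 a4 = (0 :: 'a mpoly)"
      by (auto simp: pair_var_def simp del: mult_eq_0_iff)
    then show ?thesis
      by simp
  next
    case 3
    then have "\<not> sqfree_monomial ?m" "\<not> sqfree_monomial ?m'"
      unfolding swap sqfree_monomial_def by (auto simp: lookup_add lookup_single when_def)
    then have "cong_sqfree (pair_var T a1 a2 * pair_var T a3 a4 :: 'a mpoly) 0"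
      and "cong_sqfree (pair_var T a1 a3 * pair_var T a2 a4 :: 'a mpoly) 0"
      by (simp_all add: pair_var_def Var_mult_Var mult_single cong_sqfree_single_zero)
    then show ?thesis
      using cong_sqfree_add by fastforce
  qed
qed

text \<open>The image of the central part \<open>\<Prod> (y\<^sub>i,y\<^sub>j)^(c i j)\<close> of a normal form, since
  \<open>(y\<^sub>i,y\<^sub>j) = 1 + d\<^sub>i\<^sub>j\<close>.\<close>
definition comm_poly :: "nat set \<Rightarrow> (nat \<Rightarrow> nat \<Rightarrow> bool) \<Rightarrow> 'a::comm_ring_1 mpoly" where
  "comm_poly T c = (\<Prod>(i, j) \<in> {(i, j). i \<in> T \<and> j \<in> T \<and> j < i \<and> c i j}. 1 + Var i * Var j)"

lemma cong_sqfree_comm_poly_flip_comm: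
  assumes fin: "finite T" and char2: "CHAR('a::comm_ring_1) = 2"
  shows "cong_sqfree (comm_poly T (snd (flip_comm a b x)) :: 'a mpoly)
                     (comm_poly T (snd x) * (1 + pair_var T a b))"
proof -
  obtain s c where x: "x = (s, c)" by (cases x)
  define c' where "c' i j \<longleftrightarrow> c i j \<noteq> (a \<noteq> b \<and> i = max a b \<and> j = min a b)" for i j
  define P where "P d = {(i, j). i \<in> T \<and> j \<in> T \<and> j < i \<and> d i j}" for d :: "nat \<Rightarrow> nat \<Rightarrow> bool"
  define f :: "nat \<times> nat \<Rightarrow> 'a mpoly" where "f = (\<lambda>(i, j). 1 + Var i * Var j)"
  have flip: "snd (flip_comm a b x) = c'" "snd x = c"
    by (simp_all add: x c'_def fun_eq_iff)
  have comm_poly_P: "comm_poly T d = prod f (P d)" for d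
    by (simp add: comm_poly_def P_def f_def)
  have fin_P: "finite (P d)" for d
    by (rule finite_subset[of _ "T \<times> T"]) (auto simp: P_def fin)
  show ?thesis
  proof (cases "a \<noteq> b \<and> a \<in> T \<and> b \<in> T")
    case False
    then have "P c' = P c" and "pair_var T a b = (0 :: 'a mpoly)"
      by (auto simp: P_def c'_def pair_var_def max_def min_def)
    then show ?thesis
      unfolding flip by (simp add: comm_poly_P)
  next
    case True
    define p where "p = (max a b, min a b)"
    have f_p: "f p = 1 + pair_var T a b"
      using True by (auto simp: pair_var_def f_def p_def max_def min_def mult.commute)
    show ?thesis
    proof (cases "c (max a b) (min a b)")
      case False
      then have "P c' = insert p (P c)" and "p \<notin> P c"
        using True by (auto simp: P_def c'_def p_def max_def min_def)
      then show ?thesis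
        unfolding flip by (simp add: comm_poly_P fin_P f_p mult.commute)
    next
      case True': True
      then have "P c = insert p (P c')" and "p \<notin> P c'"
        using True by (auto simp: P_def c'_def p_def max_def min_def)
      then have "comm_poly T c * (1 + pair_var T a b) = comm_poly T c' * (f p * f p)"
        by (simp add: comm_poly_P fin_P f_p ac_simps)
      moreover have "cong_sqfree (comm_poly T c' * (f p * f p)) (comm_poly T c' * 1 :: 'a mpoly)"
        by (rule cong_sqfree_mult_left)
          (simp add: f_def p_def cong_sqfree_square_one_plus[OF char2])
      ultimately show ?thesis
        unfolding flip by (simp add: cong_sqfree_sym)
    qed
  qed
qed

section \<open>Linear functionals on a monoid algebra\<close>

definition lin_ext :: "('g \<Rightarrow> 'a::comm_semiring_1) \<Rightarrow> ('g \<Rightarrow>\<^sub>0 'a) \<Rightarrow> 'a" where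
  "lin_ext f p = (\<Sum>g\<in>Poly_Mapping.keys p. Poly_Mapping.lookup p g * f g)"

lemma lin_ext_superset:
  "finite K \<Longrightarrow> Poly_Mapping.keys p \<subseteq> K \<Longrightarrow>
     lin_ext f p = (\<Sum>g\<in>K. Poly_Mapping.lookup p g * f g)"
  unfolding lin_ext_def by (rule sum.mono_neutral_left) (auto simp: in_keys_iff)

lemma lin_ext_zero [simp]: "lin_ext f 0 = 0"
  by (simp add: lin_ext_def)

lemma lin_ext_add: "lin_ext f (p + q) = lin_ext f p + lin_ext f q"
proof -
  let ?K = "Poly_Mapping.keys p \<union> Poly_Mapping.keys q"
  have "Poly_Mapping.keys (p + q) \<subseteq> ?K"
    by (auto simp: in_keys_iff lookup_add)
  then have "lin_ext f (p + q) = (\<Sum>g\<in>?K. Poly_Mapping.lookup (p + q) g * f g)"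
    by (simp add: lin_ext_superset)
  also have "\<dots> = (\<Sum>g\<in>?K. Poly_Mapping.lookup p g * f g) + (\<Sum>g\<in>?K. Poly_Mapping.lookup q g * f g)"
    by (simp add: lookup_add ring_distribs sum.distrib)
  also have "\<dots> = lin_ext f p + lin_ext f q"
    by (subst (1 2) lin_ext_superset[of ?K]) auto
  finally show ?thesis .
qed

lemma lin_ext_pointwise_scale:
  assumes "\<And>g. Poly_Mapping.lookup q g = b * Poly_Mapping.lookup p g"
  shows "lin_ext f q = b * lin_ext f p"
proof -
  have "Poly_Mapping.keys q \<subseteq> Poly_Mapping.keys p"
    by (auto simp: in_keys_iff assms)
  then have "lin_ext f q = (\<Sum>g\<in>Poly_Mapping.keys p. Poly_Mapping.lookup q g * f g)"
    by (simp add: lin_ext_superset)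
  then show ?thesis
    by (simp add: lin_ext_def assms sum_distrib_left mult.assoc)
qed

lemma lookup_single_zero_mult:
  "Poly_Mapping.lookup (Poly_Mapping.single (0::'g::monoid_add) b * p) g
     = b * Poly_Mapping.lookup p g"
  by (simp add: mult_map_scale_conv_mult[symmetric] map.rep_eq when_def)

lemma lookup_mult_single_zero:
  fixes p :: "'g::monoid_add \<Rightarrow>\<^sub>0 'a::comm_semiring_1"
  shows "Poly_Mapping.lookup (p * Poly_Mapping.single 0 b) g = b * Poly_Mapping.lookup p g"
proof -
  have "(\<Sum>n. (b when 0 = n) when g = l + n) = (b when g = l)" for l
    by (subst when_commute) simp
  then have "Poly_Mapping.lookup (p * Poly_Mapping.single 0 b) g
      = (\<Sum>l. Poly_Mapping.lookup p l * (b when g = l))"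
    by (simp only: lookup_mult lookup_single)
  then show ?thesis
    by (simp add: mult_when mult.commute)
qed

lemma update_eq_single_plus:
  "a \<notin> Poly_Mapping.keys f \<Longrightarrow> Poly_Mapping.update a b f = Poly_Mapping.single a b + f"
  by (rule poly_mapping_eqI) (auto simp: lookup_update lookup_add lookup_single when_def in_keys_iff)

lemma lin_ext_vanishes_left:
  fixes y :: "'g::monoid_add \<Rightarrow>\<^sub>0 'a::comm_semiring_1"
  assumes "\<And>g. lin_ext f (Poly_Mapping.single g 1 * y) = 0"
  shows "lin_ext f (r * y) = 0"
proof (induction r rule: update_induct)
  case (update r a b)
  have "Poly_Mapping.update a b r * y
      = Poly_Mapping.single 0 b * (Poly_Mapping.single a 1 * y) + r * y"
    using update.hyps
    by (simp add: update_eq_single_plus distrib_right mult.assoc[symmetric] mult_single)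
  then show ?case
    using update.IH assms
    by (simp add: lin_ext_add lin_ext_pointwise_scale lookup_single_zero_mult)
qed simp

lemma lin_ext_vanishes_right:
  fixes y :: "'g::monoid_add \<Rightarrow>\<^sub>0 'a::comm_semiring_1"
  assumes "\<And>g. lin_ext f (y * Poly_Mapping.single g 1) = 0"
  shows "lin_ext f (y * r) = 0"
proof (induction r rule: update_induct)
  case (update r a b)
  have "y * Poly_Mapping.update a b r
      = (y * Poly_Mapping.single a 1) * Poly_Mapping.single 0 b + y * r"
    using update.hyps
    by (simp add: update_eq_single_plus distrib_left mult.assoc mult_single)
  then show ?case
    using update.IH assms
    by (simp add: lin_ext_add lin_ext_pointwise_scale lookup_mult_single_zero)
qed simp

lemma lin_ext_vanishes_sandwich:
  fixes y :: "'g::monoid_add \<Rightarrow>\<^sub>0 'a::comm_semiring_1"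
  assumes "\<And>g h. lin_ext f (Poly_Mapping.single g 1 * y * Poly_Mapping.single h 1) = 0"
  shows "lin_ext f (r * y * t) = 0"
proof (rule lin_ext_vanishes_right)
  fix h
  show "lin_ext f (r * y * Poly_Mapping.single h 1) = 0"
    unfolding mult.assoc by (rule lin_ext_vanishes_left) (simp add: assms mult.assoc[symmetric])
qed

lemma vanishes_on_ideal_gen:
  fixes \<phi> :: "'r::ring \<Rightarrow> 'b::ab_group_add"
  assumes additive: "\<And>x y. \<phi> (x + y) = \<phi> x + \<phi> y"
    and gens: "\<And>s r t. s \<in> S \<Longrightarrow> \<phi> (r * s * t) = 0"
    and "x \<in> ideal_gen S"
  shows "\<phi> (r * x * t) = 0"
  using \<open>x \<in> ideal_gen S\<close>
proof (induction x arbitrary: r t rule: ideal_gen.induct)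
  case zero
  show ?case
    using additive[of 0 0] by simp
next
  case (add a b)
  then show ?case
    by (simp add: distrib_left distrib_right additive)
next
  case (lmult a r')
  then show ?case
    using lmult.IH[of "r * r'" t] by (simp add: mult.assoc)
next
  case (rmult a r')
  then show ?case
    using rmult.IH[of r "r' * t"] by (simp add: mult.assoc)
qed (rule gens)

section \<open>The functional \<open>\<Lambda>\<close>\<close>

text \<open>The value of \<open>\<Lambda>\<close> on \<open>g z\<close>, where \<open>g\<close> has normal form \<open>x\<close> and \<open>z\<close> is a combination of
  commutators with image \<open>r\<close>.\<close>
definition lam_coords :: "nat set \<Rightarrow> coords \<Rightarrow> 'a::comm_ring_1 mpoly \<Rightarrow> 'a" where
  "lam_coords T x r =
     (if fst x = (\<lambda>_. False) then coeff_set T (comm_poly T (snd x) * r) else 0)"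

definition lam :: "nat set \<Rightarrow> (grp \<Rightarrow>\<^sub>0 'a::field) \<Rightarrow> 'a" where
  "lam T = lin_ext (\<lambda>g. lam_coords T (coords_of g) 1)"

lemma lam_add: "lam T (p + q) = lam T p + lam T q"
  by (simp add: lam_def lin_ext_add)

lemma lam_coords_add: "lam_coords T x (r + s) = lam_coords T x r + lam_coords T x s"
  by (simp add: lam_coords_def distrib_left coeff_set_add)

lemma lam_coords_flip_comm:
  assumes fin: "finite T" and char2: "CHAR('a::comm_ring_1) = 2"
  shows "lam_coords T (flip_comm a b x) r + lam_coords T x r
       = lam_coords T x (pair_var T a b * r :: 'a mpoly)"
proof (cases "fst x = (\<lambda>_. False)")
  case True
  let ?C = "comm_poly T (snd x) :: 'a mpoly"
  have "cong_sqfree (comm_poly T (snd (flip_comm a b x)) * r) (?C * (1 + pair_var T a b) * r)"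
    by (intro cong_sqfree_mult_right cong_sqfree_comm_poly_flip_comm fin char2)
  moreover have "?C * (1 + pair_var T a b) * r = ?C * (pair_var T a b * r) + ?C * r"
    by (simp add: algebra_simps)
  ultimately have "coeff_set T (comm_poly T (snd (flip_comm a b x)) * r)
      = coeff_set T (?C * (pair_var T a b * r)) + coeff_set T (?C * r)"
    by (simp add: coeff_set_cong_sqfree[OF fin] coeff_set_add)
  then show ?thesis
    using True add_self_eq_zero_char2[OF char2, of "coeff_set T (?C * r)"]
    by (simp add: lam_coords_def add.assoc del: flip_comm.simps)
qed (simp add: lam_coords_def)

lemma lam_sandwich_prod_dd:
  assumes fin: "finite T" and char2: "CHAR('a::field) = 2"
  shows "lam T (grp_elt k * prod_list (map (\<lambda>(a, b). dd a b) L) * grp_elt h :: grp \<Rightarrow>\<^sub>0 'a)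
       = lam_coords T (coords_of (k + h)) (prod_list (map (\<lambda>(a, b). pair_var T a b) L))"
proof (induction L arbitrary: k)
  case Nil
  show ?case
    by (simp add: lam_def lin_ext_def grp_elt_def mult_single)
next
  case (Cons p L)
  obtain a b where p: "p = (a, b)"
    by (cases p)
  let ?D = "prod_list (map (\<lambda>(a, b). dd a b) L) :: grp \<Rightarrow>\<^sub>0 'a"
  let ?U = "prod_list (map (\<lambda>(a, b). pair_var T a b) L) :: 'a mpoly"
  have "grp_elt k * prod_list (map (\<lambda>(a, b). dd a b) (p # L)) * grp_elt h
      = grp_elt (k + gcomm a b) * ?D * grp_elt h + grp_elt k * ?D * grp_elt h"
    by (simp add: p dd_def grp_elt_def distrib_left distrib_right mult.assoc[symmetric] mult_single)
  then show ?case
    by (simp add: p lam_add Cons.IH coords_of_insert_gcomm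
        lam_coords_flip_comm[OF fin char2] del: flip_comm.simps)
qed

lemma lam_sandwich_relator:
  assumes fin: "finite T" and char2: "CHAR('a::field) = 2"
  shows "lam T (grp_elt g * (dd a1 a2 * dd a3 a4 + dd a1 a3 * dd a2 a4) * grp_elt h
                :: grp \<Rightarrow>\<^sub>0 'a) = 0"
proof -
  let ?x = "coords_of (g + h)"
  have split: "(grp_elt g * (dd a1 a2 * dd a3 a4 + dd a1 a3 * dd a2 a4) * grp_elt h
                :: grp \<Rightarrow>\<^sub>0 'a)
      = grp_elt g * prod_list (map (\<lambda>(a, b). dd a b) [(a1, a2), (a3, a4)]) * grp_elt h
        + grp_elt g * prod_list (map (\<lambda>(a, b). dd a b) [(a1, a3), (a2, a4)]) * grp_elt h"
    by (simp add: distrib_left distrib_right)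
  have "lam T (grp_elt g * (dd a1 a2 * dd a3 a4 + dd a1 a3 * dd a2 a4) * grp_elt h
                    :: grp \<Rightarrow>\<^sub>0 'a)
      = lam_coords T ?x (pair_var T a1 a2 * pair_var T a3 a4 + pair_var T a1 a3 * pair_var T a2 a4)"
    unfolding split lam_add lam_sandwich_prod_dd[OF fin char2] by (simp add: lam_coords_add)
  also have "\<dots> = lam_coords T ?x (0 :: 'a mpoly)"
    using coeff_set_cong_sqfree[OF fin cong_sqfree_mult_left[OF cong_sqfree_pair_var_relation[OF char2]]]
    by (simp add: lam_coords_def)
  finally show ?thesis
    by (simp add: lam_coords_def coeff_set_def)
qed

lemma lam_I_ideal:
  assumes fin: "finite T" and char2: "CHAR('a::field) = 2"
    and "x \<in> (I_ideal :: (grp \<Rightarrow>\<^sub>0 'a) set)"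
  shows "lam T x = 0"
proof -
  have gens: "lam T (r * s * t) = 0"
    if "s \<in> {dd i1 i2 * dd i3 i4 + dd i1 i3 * dd i2 i4 | i1 i2 i3 i4. True}"
    for s r t :: "grp \<Rightarrow>\<^sub>0 'a"
  proof -
    from that obtain i1 i2 i3 i4 where s: "s = dd i1 i2 * dd i3 i4 + dd i1 i3 * dd i2 i4"
      by blast
    show ?thesis
      unfolding lam_def s
      by (rule lin_ext_vanishes_sandwich)
        (rule lam_sandwich_relator[OF fin char2, unfolded lam_def grp_elt_def])
  qed
  show ?thesis
    using vanishes_on_ideal_gen[OF lam_add gens assms(3)[unfolded I_ideal_def], of 1 1] by simp
qed

lemma lam_coords_origin: "lam_coords T (\<lambda>_. False, \<lambda>_ _. False) r = coeff_set T r"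
  by (simp add: lam_coords_def comm_poly_def)

lemma prod_pair_var_consecutive:
  assumes "inj_on idx {1..2*n}" and "idx ` {1..2*n} \<subseteq> T"
  shows "prod_list (map (\<lambda>m. pair_var T (idx (2*m - 1)) (idx (2*m))) [1..<Suc n])
       = (Poly_Mapping.single (\<Sum>i\<in>{1..2*n}. unit_mono (idx i)) 1 :: 'a::comm_ring_1 mpoly)"
  using assms
proof (induction n)
  case (Suc n)
  have "inj_on idx {1..2*n}" and "idx ` {1..2*n} \<subseteq> T"
    using Suc.prems by (auto elim!: inj_on_subset)
  moreover have "idx (2*n + 1) \<in> T" "idx (2*n + 2) \<in> T" "idx (2*n + 1) \<noteq> idx (2*n + 2)"
    using Suc.prems inj_onD[OF Suc.prems(1), of "2*n + 1" "2*n + 2"] by auto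
  then have "pair_var T (idx (2 * Suc n - 1)) (idx (2 * Suc n))
      = (Poly_Mapping.single (unit_mono (idx (2*n + 1)) + unit_mono (idx (2*n + 2))) 1 :: 'a mpoly)"
    by (simp add: pair_var_def Var_mult_Var)
  ultimately show ?case
    using Suc.IH by (simp add: mult_single sum.cl_ivl_Suc add.assoc)
qed simp

theorem corollary2p7:
  fixes l :: nat and idx :: "nat \<Rightarrow> nat"
  assumes "CHAR('a::field) = 2"
    and "l > 0"
    and "inj_on idx {1..2*l}"
  shows "prod_list (map (\<lambda>m. dd (idx (2*m - 1)) (idx (2*m))) [1..<Suc l])
           \<notin> (I_ideal :: (grp \<Rightarrow>\<^sub>0 'a) set)"
proof
  let ?T = "idx ` {1..2*l}"
  let ?L = "map (\<lambda>m. (idx (2*m - 1), idx (2*m))) [1..<Suc l]"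
  let ?P = "prod_list (map (\<lambda>m. dd (idx (2*m - 1)) (idx (2*m))) [1..<Suc l]) :: grp \<Rightarrow>\<^sub>0 'a"
  have fin: "finite ?T"
    by simp
  assume "?P \<in> I_ideal"
  then have "lam ?T ?P = 0"
    by (rule lam_I_ideal[OF fin assms(1)])
  moreover have "?P = grp_elt 0 * prod_list (map (\<lambda>(a, b). dd a b) ?L) * grp_elt 0"
    by (simp add: grp_elt_def comp_def)
  then have "lam ?T ?P = coeff_set ?T (prod_list (map (\<lambda>(a, b). pair_var ?T a b) ?L))"
    by (simp only: lam_sandwich_prod_dd[OF fin assms(1)] add_0 coords_of_zero lam_coords_origin)
  moreover have "(\<Sum>i\<in>{1..2*l}. unit_mono (idx i)) = mono_set ?T"
    unfolding mono_set_def sum.reindex[OF assms(3)] comp_def ..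
  then have "prod_list (map (\<lambda>(a, b). pair_var ?T a b) ?L)
      = (Poly_Mapping.single (mono_set ?T) 1 :: 'a mpoly)"
    using prod_pair_var_consecutive[OF assms(3) order_refl]
    by (simp only: map_map comp_def case_prod_conv)
  ultimately show False
    by (simp add: coeff_set_def)
qed

end
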